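(* Let $\Bbbk$ be a field and let $\mathscr{C}$ be a Möbius category. Let $C$ be its incidence coalgebra: the $\Bbbk$-vector space with basis the set of arrows of $\mathscr{C}$, with $\Delta(f)=\sum_{(a,b):\,b\circ a=f}a\otimes b$ and $\epsilon(f)=1$ if $f$ is an identity arrow and $\epsilon(f)=0$ otherwise. For an arrow $f$ let $\ell(f)$ be the maximal $k$ such that $f=a_k\circ\cdots\circ a_1$ with all $a_i$ non-identity arrows ($\ell(f)=0$ for identities), let $C_n$ be the span of the arrows $f$ with $\ell(f)\le n$, and $C(n)$ the span of the arrows with $\ell(f)=n$. Then: $C_0\subset C_1\subset\cdots$ is a coalgebra filtration of $C$ (i.e. $\bigcup_n C_n=C$ and $\Delta(C_n)\subset\sum_{i+j=n}C_i\otimes C_j$); $C_n=C_{n-1}\oplus C(n)$ with $C(n)\subset\operatorname{Ker}\epsilon$ for $n\geq1$; $C_0$ is spanned by the identity arrows, which are group-like; and for every arrow $f:x\to y$ with $\ell(f)=n$, the projections of $\Delta(f)$ onto $C(0)\otimes C(n)$ and $C(n)\otimes C(0)$ are $\operatorname{id}_x\otimes f$ and $f\otimes\operatorname{id}_y$ respectively. In other words, the incidence coalgebra satisfies Hypothesis II (with the arrows as combinatorial elements, $\operatorname{in}(f)=\operatorname{id}_x$ and $\operatorname{out}(f)=\operatorname{id}_y$).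
   Context: A Möbius category (in the sense of Leroux) is a category in which every arrow $f$ admits only finitely many factorisations $f=a_k\circ\cdots\circ a_1$ ($k\ge0$) into non-identity arrows $a_i$ (the empty factorisation, $k=0$, only for identities). An element $x\ne0$ of a coalgebra is group-like if $\Delta(x)=x\otimes x$. Hypothesis II for a coalgebra $C$ means: $C$ is filtered, with chosen complements $C(n)\subset\operatorname{Ker}\epsilon$ ($n\ge1$), $C(0)=C_0$, and has a basis of homogeneous "combinatorial elements" closed under comultiplication, such that for every combinatorial element $f$ of degree $n$ the $(0,n)$- and $(n,0)$-components of $\Delta(f)$ are $\operatorname{in}(f)\otimes f$ and $f\otimes\operatorname{out}(f)$ with $\operatorname{in}(f),\operatorname{out}(f)$ group-like combinatorial elements. *)

theory Defs
  imports Main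
begin

text \<open>A (small) category, given by a set of objects, a set of arrows, source and
target maps, composition (cmp C g f = g after f, meaningful when tgt f = src g)
and identities.\<close>

record ('o, 'a) category =
  obj :: "'o set"
  arr :: "'a set"
  src :: "'a \<Rightarrow> 'o"
  tgt :: "'a \<Rightarrow> 'o"
  cmp :: "'a \<Rightarrow> 'a \<Rightarrow> 'a"
  idn :: "'o \<Rightarrow> 'a"

definition is_category :: "('o, 'a) category \<Rightarrow> bool" where
  "is_category C \<longleftrightarrow>
     (\<forall>f\<in>arr C. src C f \<in> obj C \<and> tgt C f \<in> obj C) \<and>
     (\<forall>x\<in>obj C. idn C x \<in> arr C \<and> src C (idn C x) = x \<and> tgt C (idn C x) = x) \<and>
     (\<forall>f\<in>arr C. \<forall>g\<in>arr C. tgt C f = src C g \<longrightarrow>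
         cmp C g f \<in> arr C \<and> src C (cmp C g f) = src C f \<and> tgt C (cmp C g f) = tgt C g) \<and>
     (\<forall>f\<in>arr C. cmp C (idn C (tgt C f)) f = f \<and> cmp C f (idn C (src C f)) = f) \<and>
     (\<forall>f\<in>arr C. \<forall>g\<in>arr C. \<forall>h\<in>arr C. tgt C f = src C g \<and> tgt C g = src C h \<longrightarrow>
         cmp C h (cmp C g f) = cmp C (cmp C h g) f)"

definition ids :: "('o, 'a) category \<Rightarrow> 'a set" where
  "ids C = idn C ` obj C"

text \<open>comp_list C a [b1,...,bk] = bk o ... o b1 o a\<close>
fun comp_list :: "('o, 'a) category \<Rightarrow> 'a \<Rightarrow> 'a list \<Rightarrow> 'a" where
  "comp_list C acc [] = acc"
| "comp_list C acc (b # bs) = comp_list C (cmp C b acc) bs"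

definition composable_chain :: "('o, 'a) category \<Rightarrow> 'a list \<Rightarrow> bool" where
  "composable_chain C as \<longleftrightarrow> (\<forall>i. Suc i < length as \<longrightarrow> tgt C (as ! i) = src C (as ! Suc i))"

text \<open>Factorisations f = a_k o ... o a_1 into non-identity arrows, as lists [a_1,...,a_k];
the empty factorisation only for identities.\<close>
definition factorizations :: "('o, 'a) category \<Rightarrow> 'a \<Rightarrow> 'a list set" where
  "factorizations C f = {as. set as \<subseteq> arr C - ids C \<and> composable_chain C as \<and>
      (case as of [] \<Rightarrow> f \<in> ids C | a # bs \<Rightarrow> comp_list C a bs = f)}"

definition mobius_category :: "('o, 'a) category \<Rightarrow> bool" where
  "mobius_category C \<longleftrightarrow> is_category C \<and> (\<forall>f\<in>arr C. finite (factorizations C f))"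

definition ell :: "('o, 'a) category \<Rightarrow> 'a \<Rightarrow> nat" where
  "ell C f = Max (length ` factorizations C f)"

text \<open>Incidence coalgebra: the free vector space on the arrows, as finitely supported
functions arr C \<rightarrow> k; C \<otimes> C is identified with the free vector space on arr C \<times> arr C.\<close>

definition incidence_space :: "('o, 'a) category \<Rightarrow> ('a \<Rightarrow> 'k::zero) set" where
  "incidence_space C = {v. finite {f. v f \<noteq> 0} \<and> (\<forall>f. v f \<noteq> 0 \<longrightarrow> f \<in> arr C)}"

definition tensor_space :: "('o, 'a) category \<Rightarrow> ('a \<times> 'a \<Rightarrow> 'k::zero) set" where
  "tensor_space C = {t. finite {p. t p \<noteq> 0} \<and> (\<forall>p. t p \<noteq> 0 \<longrightarrow> p \<in> arr C \<times> arr C)}"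

definition bv :: "'a \<Rightarrow> ('a \<Rightarrow> 'k::{zero,one})" where
  "bv f = (\<lambda>g. if g = f then 1 else 0)"

definition tensor :: "('a \<Rightarrow> 'k::times) \<Rightarrow> ('a \<Rightarrow> 'k) \<Rightarrow> ('a \<times> 'a \<Rightarrow> 'k)" where
  "tensor u w = (\<lambda>(a, b). u a * w b)"

text \<open>Comultiplication Delta(f) = sum over (a,b) with b o a = f of a \<otimes> b, extended linearly:
the coefficient of a \<otimes> b in Delta(v) is v(b o a) when a, b are composable, else 0.\<close>
definition comult :: "('o, 'a) category \<Rightarrow> ('a \<Rightarrow> 'k::zero) \<Rightarrow> ('a \<times> 'a \<Rightarrow> 'k)" where
  "comult C v = (\<lambda>(a, b). if a \<in> arr C \<and> b \<in> arr C \<and> tgt C a = src C b then v (cmp C b a) else 0)"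

definition counit :: "('o, 'a) category \<Rightarrow> ('a \<Rightarrow> 'k::comm_monoid_add) \<Rightarrow> 'k" where
  "counit C v = sum v {f \<in> ids C. v f \<noteq> 0}"

definition span_arrows :: "('o, 'a) category \<Rightarrow> 'a set \<Rightarrow> ('a \<Rightarrow> 'k::zero) set" where
  "span_arrows C S = {v \<in> incidence_space C. \<forall>f. v f \<noteq> 0 \<longrightarrow> f \<in> S}"

definition span_pairs :: "('o, 'a) category \<Rightarrow> ('a \<times> 'a) set \<Rightarrow> ('a \<times> 'a \<Rightarrow> 'k::zero) set" where
  "span_pairs C P = {t \<in> tensor_space C. \<forall>p. t p \<noteq> 0 \<longrightarrow> p \<in> P}"

definition filt :: "('o, 'a) category \<Rightarrow> nat \<Rightarrow> ('a \<Rightarrow> 'k::zero) set" where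
  "filt C n = span_arrows C {f \<in> arr C. ell C f \<le> n}"

definition grad :: "('o, 'a) category \<Rightarrow> nat \<Rightarrow> ('a \<Rightarrow> 'k::zero) set" where
  "grad C n = span_arrows C {f \<in> arr C. ell C f = n}"

text \<open>sum_{i+j=n} C_i \<otimes> C_j, which is spanned by the basis tensors a \<otimes> b with
l(a) \<le> i, l(b) \<le> j for some i + j = n.\<close>
definition filt_tensor :: "('o, 'a) category \<Rightarrow> nat \<Rightarrow> ('a \<times> 'a \<Rightarrow> 'k::zero) set" where
  "filt_tensor C n = span_pairs C (\<Union>i\<in>{..n}.
      {f \<in> arr C. ell C f \<le> i} \<times> {g \<in> arr C. ell C g \<le> n - i})"

definition proj_tensor :: "('o, 'a) category \<Rightarrow> nat \<Rightarrow> nat \<Rightarrow> ('a \<times> 'a \<Rightarrow> 'k::zero) \<Rightarrow> ('a \<times> 'a \<Rightarrow> 'k)" where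
  "proj_tensor C i j t = (\<lambda>(a, b). if a \<in> arr C \<and> b \<in> arr C \<and> ell C a = i \<and> ell C b = j then t (a, b) else 0)"

end

(* Factorisations into non-identity arrows can be concatenated, so the length is superadditive,
   l(a) + l(b) <= l(b o a); this is what makes the length filtration a coalgebra filtration.
   In a Moebius category a nonempty factorisation of an identity could be repeated indefinitely,
   so identities have only the empty factorisation and are exactly the arrows of length 0.
   Hence an identity decomposes only as id o id (it is group-like), and the only decompositions
   b o a = f with a factor of length 0 are f o id and id o f. *)

theory Submission
  imports Defs
begin

lemma composable_chain_Nil [simp]: "composable_chain C []"
  and composable_chain_single [simp]: "composable_chain C [a]"
  by (auto simp: composable_chain_def)

lemma composable_chain_Cons_Cons [simp]:
  "composable_chain C (a # b # bs) \<longleftrightarrow> tgt C a = src C b \<and> composable_chain C (b # bs)"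
  unfolding composable_chain_def
  by (auto simp: less_Suc_eq_0_disj nth_Cons split: nat.splits)

lemma composable_chain_append:
  assumes "composable_chain C xs" "composable_chain C (y # ys)"
    and "xs \<noteq> [] \<Longrightarrow> tgt C (last xs) = src C y"
  shows "composable_chain C (xs @ y # ys)"
  using assms by (induction xs rule: induct_list012) auto

lemma comp_list_append: "comp_list C a (xs @ ys) = comp_list C (comp_list C a xs) ys"
  by (induction xs arbitrary: a) auto

lemma composable_chain_replace_head:
  "tgt C x = tgt C y \<Longrightarrow> composable_chain C (x # ys) = composable_chain C (y # ys)"
  by (cases ys) auto

definition decompositions :: "('o, 'a) category \<Rightarrow> 'a \<Rightarrow> ('a \<times> 'a) set" where
  "decompositions C f = {(a, b). a \<in> arr C \<and> b \<in> arr C \<and> tgt C a = src C b \<and> cmp C b a = f}"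

locale cat =
  fixes C :: "('o, 'a) category"
  assumes is_category: "is_category C"
begin

lemma src_tgt_in_obj: "f \<in> arr C \<Longrightarrow> src C f \<in> obj C \<and> tgt C f \<in> obj C"
  and idn_in_arr: "x \<in> obj C \<Longrightarrow> idn C x \<in> arr C"
  and src_idn [simp]: "x \<in> obj C \<Longrightarrow> src C (idn C x) = x"
  and tgt_idn [simp]: "x \<in> obj C \<Longrightarrow> tgt C (idn C x) = x"
  and cmp_in_arr: "f \<in> arr C \<Longrightarrow> g \<in> arr C \<Longrightarrow> tgt C f = src C g \<Longrightarrow> cmp C g f \<in> arr C"
  and src_cmp [simp]: "f \<in> arr C \<Longrightarrow> g \<in> arr C \<Longrightarrow> tgt C f = src C g \<Longrightarrow> src C (cmp C g f) = src C f"
  and tgt_cmp [simp]: "f \<in> arr C \<Longrightarrow> g \<in> arr C \<Longrightarrow> tgt C f = src C g \<Longrightarrow> tgt C (cmp C g f) = tgt C g"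
  and cmp_idn_left [simp]: "f \<in> arr C \<Longrightarrow> cmp C (idn C (tgt C f)) f = f"
  and cmp_idn_right [simp]: "f \<in> arr C \<Longrightarrow> cmp C f (idn C (src C f)) = f"
  and cmp_assoc: "f \<in> arr C \<Longrightarrow> g \<in> arr C \<Longrightarrow> h \<in> arr C \<Longrightarrow> tgt C f = src C g \<Longrightarrow> tgt C g = src C h \<Longrightarrow>
         cmp C h (cmp C g f) = cmp C (cmp C h g) f"
  using is_category unfolding is_category_def by blast+

lemma idsE:
  assumes "e \<in> ids C"
  obtains x where "x \<in> obj C" "e = idn C x"
  using assms unfolding ids_def by blast

lemma ids_subset_arr: "ids C \<subseteq> arr C"
  by (auto elim: idsE simp: idn_in_arr)

lemma idn_in_ids: "x \<in> obj C \<Longrightarrow> idn C x \<in> ids C"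
  unfolding ids_def by blast

lemma cmp_id_left:
  assumes "e \<in> ids C" "f \<in> arr C" "tgt C e = src C f"
  shows "e = idn C (src C f)" "cmp C f e = f"
  using assms by (auto elim!: idsE)

lemma cmp_id_right:
  assumes "e \<in> ids C" "f \<in> arr C" "tgt C f = src C e"
  shows "e = idn C (tgt C f)" "cmp C e f = f"
  using assms by (auto elim!: idsE)

lemma comp_list_arr:
  assumes "set (a # bs) \<subseteq> arr C" "composable_chain C (a # bs)"
  shows "comp_list C a bs \<in> arr C \<and> src C (comp_list C a bs) = src C a
    \<and> tgt C (comp_list C a bs) = tgt C (last (a # bs))"
  using assms
proof (induction bs arbitrary: a)
  case (Cons b bs)
  have "composable_chain C (cmp C b a # bs)"
    using Cons.prems composable_chain_replace_head[of C "cmp C b a" b bs] by (simp add: cmp_in_arr)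
  with Cons.prems Cons.IH[of "cmp C b a"] show ?case
    by (simp add: cmp_in_arr)
qed simp

lemma comp_list_cmp:
  assumes "set (b # bs) \<subseteq> arr C" "composable_chain C (b # bs)" "a \<in> arr C" "tgt C a = src C b"
  shows "comp_list C (cmp C b a) bs = cmp C (comp_list C b bs) a"
  using assms
proof (induction bs arbitrary: b)
  case (Cons c cs)
  have "composable_chain C (cmp C c b # cs)"
    using Cons.prems composable_chain_replace_head[of C "cmp C c b" c cs] by (simp add: cmp_in_arr)
  with Cons.prems Cons.IH[of "cmp C c b"] show ?case
    by (simp add: cmp_in_arr cmp_assoc)
qed simp

lemma factorization_ConsD:
  assumes "a # as \<in> factorizations C f"
  shows "f = comp_list C a as" "f \<in> arr C" "src C f = src C a" "tgt C f = tgt C (last (a # as))"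
proof -
  have "set (a # as) \<subseteq> arr C" "composable_chain C (a # as)" "f = comp_list C a as"
    using assms unfolding factorizations_def by auto
  then show "f = comp_list C a as" "f \<in> arr C" "src C f = src C a" "tgt C f = tgt C (last (a # as))"
    using comp_list_arr[of a as] by auto
qed

lemma factorizations_NilD: "[] \<in> factorizations C f \<Longrightarrow> f \<in> ids C"
  unfolding factorizations_def by simp

lemma factorizations_nonempty:
  assumes "f \<in> arr C"
  shows "factorizations C f \<noteq> {}"
proof (cases "f \<in> ids C")
  case True
  then have "[] \<in> factorizations C f" unfolding factorizations_def by simp
  then show ?thesis by blast
next
  case False
  then have "[f] \<in> factorizations C f" using assms unfolding factorizations_def by simp
  then show ?thesis by blast
qed

lemma factorizations_Cons_append:
  assumes la: "a0 # as \<in> factorizations C a" and lb: "b0 # bs \<in> factorizations C b"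
    and ab: "tgt C a = src C b"
  shows "a0 # as @ b0 # bs \<in> factorizations C (cmp C b a)"
proof -
  have chains: "composable_chain C (a0 # as)" "composable_chain C (b0 # bs)"
    and arrows: "set (a0 # as) \<subseteq> arr C - ids C" "set (b0 # bs) \<subseteq> arr C - ids C"
    using la lb unfolding factorizations_def by auto
  have "tgt C (last (a0 # as)) = src C b0"
    using factorization_ConsD(4)[OF la] factorization_ConsD(3)[OF lb] ab by simp
  then have "composable_chain C (a0 # as @ b0 # bs)"
    using composable_chain_append[OF chains] by simp
  moreover have "comp_list C a0 (as @ b0 # bs) = cmp C b a"
  proof -
    have "comp_list C a0 (as @ b0 # bs) = comp_list C (cmp C b0 a) bs"
      using factorization_ConsD(1)[OF la] by (simp add: comp_list_append)
    also have "\<dots> = cmp C (comp_list C b0 bs) a"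
      using comp_list_cmp[OF _ chains(2)] arrows(2) factorization_ConsD(2,3)[OF la]
        factorization_ConsD(3)[OF lb] ab by auto
    also have "\<dots> = cmp C b a"
      using factorization_ConsD(1)[OF lb] by simp
    finally show ?thesis .
  qed
  ultimately show ?thesis
    using arrows unfolding factorizations_def by auto
qed

lemma factorizations_append:
  assumes la: "la \<in> factorizations C a" and lb: "lb \<in> factorizations C b"
    and a: "a \<in> arr C" and b: "b \<in> arr C" and ab: "tgt C a = src C b"
  shows "la @ lb \<in> factorizations C (cmp C b a)"
proof (cases la)
  case Nil
  then have "a \<in> ids C" using la factorizations_NilD by blast
  then show ?thesis using Nil lb b ab cmp_id_left[of a b] by simp
next
  case (Cons a0 as)
  show ?thesis
  proof (cases lb)
    case Nil
    then have "b \<in> ids C" using lb factorizations_NilD by blast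
    then show ?thesis using Nil la a ab cmp_id_right[of b a] by simp
  next
    case (Cons b0 bs)
    then show ?thesis
      using factorizations_Cons_append[of a0 as a b0 bs b] la lb ab \<open>la = a0 # as\<close> by simp
  qed
qed

lemma decompositions_id_left:
  assumes "(a, b) \<in> decompositions C f" "a \<in> ids C"
  shows "a = idn C (src C f) \<and> b = f"
  using assms cmp_id_left[of a b] unfolding decompositions_def by auto

lemma decompositions_id_right:
  assumes "(a, b) \<in> decompositions C f" "b \<in> ids C"
  shows "a = f \<and> b = idn C (tgt C f)"
  using assms cmp_id_right[of b a] unfolding decompositions_def by auto

lemma decompositions_non_ids:
  assumes "(a, b) \<in> decompositions C f" "a \<notin> ids C" "b \<notin> ids C"
  shows "[a, b] \<in> factorizations C f"
  using assms unfolding decompositions_def factorizations_def by auto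

lemma idn_decompositions:
  assumes "f \<in> arr C"
  shows "(idn C (src C f), f) \<in> decompositions C f" "(f, idn C (tgt C f)) \<in> decompositions C f"
  using assms src_tgt_in_obj[OF assms] unfolding decompositions_def by (auto simp: idn_in_arr)

end

locale mobius_cat = cat +
  assumes finite_factorizations: "f \<in> arr C \<Longrightarrow> finite (factorizations C f)"

lemma mobius_catI: "mobius_category C \<Longrightarrow> mobius_cat C"
  unfolding mobius_category_def by unfold_locales auto

context mobius_cat
begin

lemma factorizations_ids:
  assumes e: "e \<in> ids C"
  shows "factorizations C e = {[]}"
proof -
  obtain x where x: "x \<in> obj C" "e = idn C x" using e by (rule idsE)
  have e_arr: "e \<in> arr C" and ee: "cmp C e e = e"
    using x cmp_idn_left[of e] by (auto simp: idn_in_arr)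
  have "l = []" if l: "l \<in> factorizations C e" for l
  proof (rule ccontr)
    assume "l \<noteq> []"
    have powers: "concat (replicate n l) \<in> factorizations C e" for n
    proof (induction n)
      case 0
      show ?case using e unfolding factorizations_def by simp
    next
      case (Suc n)
      then show ?case
        using factorizations_append[OF l Suc e_arr e_arr] x ee by simp
    qed
    have "length (concat (replicate n l)) = n * length l" for n
      by (induction n) auto
    then have "inj (\<lambda>n. concat (replicate n l))"
      using \<open>l \<noteq> []\<close> by (intro injI) (metis mult_right_cancel length_0_conv)
    then have "infinite (range (\<lambda>n. concat (replicate n l)))"
      using finite_imageD by blast
    moreover have "range (\<lambda>n. concat (replicate n l)) \<subseteq> factorizations C e"
      using powers by blast
    ultimately show False
      using finite_factorizations[OF e_arr] finite_subset by blast
  qed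
  moreover have "[] \<in> factorizations C e"
    using e unfolding factorizations_def by simp
  ultimately show ?thesis by blast
qed

lemma length_le_ell: "f \<in> arr C \<Longrightarrow> l \<in> factorizations C f \<Longrightarrow> length l \<le> ell C f"
  unfolding ell_def using finite_factorizations by simp

lemma ell_attained:
  assumes "f \<in> arr C"
  obtains l where "l \<in> factorizations C f" "length l = ell C f"
proof -
  have "ell C f \<in> length ` factorizations C f"
    unfolding ell_def
    using finite_factorizations[OF assms] factorizations_nonempty[OF assms] by (intro Max_in) auto
  then show ?thesis using that by (metis imageE)
qed

lemma ell_ids: "e \<in> ids C \<Longrightarrow> ell C e = 0"
  by (simp add: ell_def factorizations_ids)

lemma ell_eq_0_iff: "f \<in> arr C \<Longrightarrow> ell C f = 0 \<longleftrightarrow> f \<in> ids C"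
proof
  assume "f \<in> arr C" "ell C f = 0"
  moreover have "f \<notin> ids C \<Longrightarrow> [f] \<in> factorizations C f"
    using \<open>f \<in> arr C\<close> unfolding factorizations_def by simp
  ultimately show "f \<in> ids C" using length_le_ell by fastforce
qed (rule ell_ids)

lemma ell_cmp:
  assumes "a \<in> arr C" "b \<in> arr C" "tgt C a = src C b"
  shows "ell C a + ell C b \<le> ell C (cmp C b a)"
proof -
  obtain la lb where "la \<in> factorizations C a" "length la = ell C a"
    and "lb \<in> factorizations C b" "length lb = ell C b"
    using ell_attained assms by metis
  then show ?thesis
    using factorizations_append length_le_ell cmp_in_arr assms by (metis length_append)
qed

lemma finite_decompositions: "finite (decompositions C f)"
proof (cases "f \<in> arr C")
  case False
  then have "decompositions C f = {}"
    unfolding decompositions_def using cmp_in_arr by blast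
  then show ?thesis by simp
next
  case True
  let ?trivial = "{(idn C (src C f), f), (f, idn C (tgt C f))}"
  have "(a, b) \<in> ?trivial \<union> (\<lambda>l. (l ! 0, l ! 1)) ` factorizations C f"
    if ab: "(a, b) \<in> decompositions C f" for a b
  proof (cases "a \<in> ids C \<or> b \<in> ids C")
    case True
    then show ?thesis
      using decompositions_id_left[OF ab] decompositions_id_right[OF ab] by blast
  next
    case False
    then have "[a, b] \<in> factorizations C f"
      using decompositions_non_ids[OF ab] by blast
    then show ?thesis by (auto intro: rev_image_eqI)
  qed
  then have "decompositions C f \<subseteq> ?trivial \<union> (\<lambda>l. (l ! 0, l ! 1)) ` factorizations C f"
    by auto
  then show ?thesis
    using finite_factorizations[OF True] finite_subset by blast
qed

lemma decompositions_idn: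
  assumes x: "x \<in> obj C"
  shows "decompositions C (idn C x) = {(idn C x, idn C x)}"
proof -
  have "a = idn C x \<and> b = idn C x" if ab: "(a, b) \<in> decompositions C (idn C x)" for a b
  proof (cases "a \<in> ids C \<or> b \<in> ids C")
    case True
    then show ?thesis
      using decompositions_id_left[OF ab] decompositions_id_right[OF ab] x by auto
  next
    case False
    then have "[a, b] \<in> factorizations C (idn C x)"
      using decompositions_non_ids[OF ab] by blast
    then show ?thesis
      using factorizations_ids[OF idn_in_ids[OF x]] by simp
  qed
  moreover have "(idn C x, idn C x) \<in> decompositions C (idn C x)"
    using idn_decompositions(1)[of "idn C x"] x by (simp add: idn_in_arr)
  ultimately show ?thesis by auto
qed

lemma decompositions_ell_left_0_iff:
  assumes f: "f \<in> arr C"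
  shows "(a, b) \<in> decompositions C f \<and> ell C a = 0 \<longleftrightarrow> a = idn C (src C f) \<and> b = f"
proof -
  have "ell C (idn C (src C f)) = 0"
    using ell_ids idn_in_ids src_tgt_in_obj[OF f] by blast
  moreover have "ell C a = 0 \<longleftrightarrow> a \<in> ids C" if "(a, b) \<in> decompositions C f"
    using that ell_eq_0_iff unfolding decompositions_def by blast
  ultimately show ?thesis
    using idn_decompositions(1)[OF f] decompositions_id_left by blast
qed

lemma decompositions_ell_right_0_iff:
  assumes f: "f \<in> arr C"
  shows "(a, b) \<in> decompositions C f \<and> ell C b = 0 \<longleftrightarrow> a = f \<and> b = idn C (tgt C f)"
proof -
  have "ell C (idn C (tgt C f)) = 0"
    using ell_ids idn_in_ids src_tgt_in_obj[OF f] by blast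
  moreover have "ell C b = 0 \<longleftrightarrow> b \<in> ids C" if "(a, b) \<in> decompositions C f"
    using that ell_eq_0_iff unfolding decompositions_def by blast
  ultimately show ?thesis
    using idn_decompositions(2)[OF f] decompositions_id_right by blast
qed

end

lemma filt_mono: "m \<le> n \<Longrightarrow> filt C m \<subseteq> filt C n"
  unfolding filt_def span_arrows_def by auto

lemma grad_subset_filt: "grad C n \<subseteq> filt C n"
  unfolding filt_def grad_def span_arrows_def by auto

lemma grad_0: "grad C 0 = filt C 0"
  unfolding filt_def grad_def by simp

lemma Union_filt: "(\<Union>n. filt C n) = incidence_space C"
proof
  show "(\<Union>n. filt C n) \<subseteq> incidence_space C"
    unfolding filt_def span_arrows_def by blast
next
  show "incidence_space C \<subseteq> (\<Union>n. filt C n)"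
  proof
    fix v assume v: "v \<in> incidence_space C"
    then have "finite {f. v f \<noteq> 0}" unfolding incidence_space_def by simp
    then have "v f \<noteq> 0 \<Longrightarrow> ell C f \<le> Max (ell C ` {f. v f \<noteq> 0})" for f
      by simp
    then have "v \<in> filt C (Max (ell C ` {f. v f \<noteq> 0}))"
      using v unfolding filt_def span_arrows_def incidence_space_def by auto
    then show "v \<in> (\<Union>n. filt C n)" by blast
  qed
qed

lemma filt_inter_grad: "m < n \<Longrightarrow> filt C m \<inter> grad C n = {\<lambda>_. 0}"
  unfolding filt_def grad_def span_arrows_def incidence_space_def by fastforce

lemma filt_Suc_decompose:
  assumes v: "(v :: 'a \<Rightarrow> 'k::monoid_add) \<in> filt C (Suc n)"
  shows "\<exists>u\<in>filt C n. \<exists>w\<in>grad C (Suc n). v = (\<lambda>g. u g + w g)"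
proof -
  have fin: "finite {f. v f \<noteq> 0}" and supp: "\<And>f. v f \<noteq> 0 \<Longrightarrow> f \<in> arr C \<and> ell C f \<le> Suc n"
    using v unfolding filt_def span_arrows_def incidence_space_def by auto
  define u where "u g = (if ell C g = Suc n then 0 else v g)" for g
  define w where "w g = (if ell C g = Suc n then v g else 0)" for g
  have "u \<in> filt C n" "w \<in> grad C (Suc n)"
    using supp unfolding u_def w_def filt_def grad_def span_arrows_def incidence_space_def
    by (auto intro: finite_subset[OF _ fin] dest: le_SucE)
  moreover have "v = (\<lambda>g. u g + w g)"
    unfolding u_def w_def by auto
  ultimately show ?thesis by blast
qed

lemma decompositions_arr: "(a, b) \<in> decompositions C f \<Longrightarrow> a \<in> arr C \<and> b \<in> arr C"
  unfolding decompositions_def by simp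

lemma comult_nonzeroD:
  "comult C v (a, b) \<noteq> 0 \<Longrightarrow> (a, b) \<in> decompositions C (cmp C b a) \<and> v (cmp C b a) \<noteq> 0"
  unfolding comult_def decompositions_def by (auto split: if_splits)

lemma comult_bv: "comult C (bv f) = (\<lambda>p. if p \<in> decompositions C f then 1 else 0)"
  unfolding comult_def decompositions_def bv_def by (auto split: prod.split)

lemma tensor_bv: "tensor (bv a) (bv b) = (\<lambda>p. if p = (a, b) then 1 else (0 :: 'k::{monoid_mult, mult_zero}))"
  unfolding tensor_def bv_def by (auto split: prod.split)

lemma bv_nonzero: "(bv a :: 'a \<Rightarrow> 'k::zero_neq_one) \<noteq> (\<lambda>_. 0)"
  unfolding bv_def by (metis zero_neq_one)

context mobius_cat
begin

lemma filt_0: "filt C 0 = span_arrows C (ids C)"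
proof -
  have "{f \<in> arr C. ell C f \<le> 0} = ids C"
    using ell_eq_0_iff ids_subset_arr by auto
  then show ?thesis unfolding filt_def by simp
qed

lemma counit_grad:
  assumes "0 < n" "w \<in> grad C n"
  shows "counit C w = 0"
proof -
  have "{f \<in> ids C. w f \<noteq> 0} = {}"
    using assms ell_ids unfolding grad_def span_arrows_def by fastforce
  then show ?thesis unfolding counit_def by simp
qed

lemma comult_in_tensor_space:
  assumes v: "v \<in> incidence_space C"
  shows "comult C v \<in> tensor_space C"
proof -
  have "{p. comult C v p \<noteq> 0} \<subseteq> (\<Union>g\<in>{f. v f \<noteq> 0}. decompositions C g)"
    using comult_nonzeroD by fastforce
  moreover have "finite (\<Union>g\<in>{f. v f \<noteq> 0}. decompositions C g)"
    using v finite_decompositions unfolding incidence_space_def by blast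
  ultimately have "finite {p. comult C v p \<noteq> 0}"
    by (rule finite_subset)
  moreover have "comult C v p \<noteq> 0 \<Longrightarrow> p \<in> arr C \<times> arr C" for p
    using comult_nonzeroD[of C v "fst p" "snd p"] unfolding decompositions_def by auto
  ultimately show ?thesis unfolding tensor_space_def by blast
qed

lemma comult_filt:
  assumes v: "v \<in> filt C n"
  shows "comult C v \<in> filt_tensor C n"
proof -
  have "(a, b) \<in> (\<Union>i\<in>{..n}. {f \<in> arr C. ell C f \<le> i} \<times> {g \<in> arr C. ell C g \<le> n - i})"
    if "comult C v (a, b) \<noteq> 0" for a b
  proof -
    have ab: "(a, b) \<in> decompositions C (cmp C b a)" and "v (cmp C b a) \<noteq> 0"
      using comult_nonzeroD[OF that] by auto
    then have "ell C (cmp C b a) \<le> n"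
      using v unfolding filt_def span_arrows_def by auto
    moreover have "ell C a + ell C b \<le> ell C (cmp C b a)"
      using ab ell_cmp unfolding decompositions_def by blast
    ultimately show ?thesis
      using ab unfolding decompositions_def by (intro UN_I[of "ell C a"]) auto
  qed
  moreover have "comult C v \<in> tensor_space C"
    using v comult_in_tensor_space unfolding filt_def span_arrows_def by blast
  ultimately show ?thesis
    unfolding filt_tensor_def span_pairs_def by fastforce
qed

lemma comult_idn:
  "x \<in> obj C \<Longrightarrow>
    comult C (bv (idn C x) :: _ \<Rightarrow> 'k::{monoid_mult, mult_zero}) = tensor (bv (idn C x)) (bv (idn C x))"
  by (simp add: comult_bv tensor_bv decompositions_idn)

lemma proj_tensor_comult_left:
  assumes f: "f \<in> arr C"
  shows "proj_tensor C 0 (ell C f) (comult C (bv f :: _ \<Rightarrow> 'k::{monoid_mult, mult_zero})) = tensor (bv (idn C (src C f))) (bv f)"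
proof (rule ext, clarify)
  fix a b
  show "proj_tensor C 0 (ell C f) (comult C (bv f :: _ \<Rightarrow> 'k)) (a, b) = tensor (bv (idn C (src C f))) (bv f) (a, b)"
    using decompositions_ell_left_0_iff[OF f, of a b] decompositions_arr[of a b C f]
    unfolding proj_tensor_def comult_bv tensor_bv by auto
qed

lemma proj_tensor_comult_right:
  assumes f: "f \<in> arr C"
  shows "proj_tensor C (ell C f) 0 (comult C (bv f :: _ \<Rightarrow> 'k::{monoid_mult, mult_zero})) = tensor (bv f) (bv (idn C (tgt C f)))"
proof (rule ext, clarify)
  fix a b
  show "proj_tensor C (ell C f) 0 (comult C (bv f :: _ \<Rightarrow> 'k)) (a, b) = tensor (bv f) (bv (idn C (tgt C f))) (a, b)"
    using decompositions_ell_right_0_iff[OF f, of a b] decompositions_arr[of a b C f]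
    unfolding proj_tensor_def comult_bv tensor_bv by auto
qed

end

theorem proposition6p3:
  fixes C :: "('o, 'a) category"
  assumes "mobius_category C"
  shows
    "(\<forall>f\<in>arr C. finite (length ` factorizations C f) \<and> factorizations C f \<noteq> {})
   \<and> (\<Union>n. filt C n) = (incidence_space C :: ('a \<Rightarrow> 'k::field) set)
   \<and> (\<forall>n. (filt C n :: ('a \<Rightarrow> 'k) set) \<subseteq> filt C (Suc n))
   \<and> (\<forall>v\<in>incidence_space C. (comult C (v :: 'a \<Rightarrow> 'k)) \<in> tensor_space C)
   \<and> (\<forall>n. \<forall>v\<in>filt C n. (comult C (v :: 'a \<Rightarrow> 'k)) \<in> filt_tensor C n)
   \<and> (\<forall>n\<ge>1. (grad C n :: ('a \<Rightarrow> 'k) set) \<subseteq> filt C n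
        \<and> (filt C (n - 1) :: ('a \<Rightarrow> 'k) set) \<subseteq> filt C n
        \<and> (filt C (n - 1) \<inter> grad C n :: ('a \<Rightarrow> 'k) set) = {\<lambda>_. 0}
        \<and> (\<forall>v\<in>(filt C n :: ('a \<Rightarrow> 'k) set). \<exists>u\<in>filt C (n - 1). \<exists>w\<in>grad C n. v = (\<lambda>g. u g + w g))
        \<and> (\<forall>w\<in>(grad C n :: ('a \<Rightarrow> 'k) set). counit C w = 0))
   \<and> (filt C 0 :: ('a \<Rightarrow> 'k) set) = span_arrows C (ids C)
   \<and> (grad C 0 :: ('a \<Rightarrow> 'k) set) = filt C 0
   \<and> (\<forall>x\<in>obj C. (bv (idn C x) :: 'a \<Rightarrow> 'k) \<noteq> (\<lambda>_. 0)
        \<and> comult C (bv (idn C x) :: 'a \<Rightarrow> 'k) = tensor (bv (idn C x)) (bv (idn C x)))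
   \<and> (\<forall>f\<in>arr C.
        proj_tensor C 0 (ell C f) (comult C (bv f :: 'a \<Rightarrow> 'k)) = tensor (bv (idn C (src C f))) (bv f)
      \<and> proj_tensor C (ell C f) 0 (comult C (bv f :: 'a \<Rightarrow> 'k)) = tensor (bv f) (bv (idn C (tgt C f))))"
proof -
  interpret mobius_cat C
    using assms by (rule mobius_catI)
  have layer: "(grad C n :: ('a \<Rightarrow> 'k) set) \<subseteq> filt C n
        \<and> (filt C (n - 1) :: ('a \<Rightarrow> 'k) set) \<subseteq> filt C n
        \<and> (filt C (n - 1) \<inter> grad C n :: ('a \<Rightarrow> 'k) set) = {\<lambda>_. 0}
        \<and> (\<forall>v\<in>(filt C n :: ('a \<Rightarrow> 'k) set). \<exists>u\<in>filt C (n - 1). \<exists>w\<in>grad C n. v = (\<lambda>g. u g + w g))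
        \<and> (\<forall>w\<in>(grad C n :: ('a \<Rightarrow> 'k) set). counit C w = 0)" if "1 \<le> n" for n
  proof -
    obtain m where n: "n = Suc m" using \<open>1 \<le> n\<close> by (cases n) auto
    show ?thesis
      unfolding n
      by (intro conjI ballI grad_subset_filt filt_mono filt_inter_grad counit_grad)
        (auto dest: filt_Suc_decompose)
  qed
  show ?thesis
    using layer
    by (intro conjI ballI allI impI finite_factorizations factorizations_nonempty finite_imageI
        Union_filt filt_mono comult_in_tensor_space comult_filt filt_0 grad_0 bv_nonzero comult_idn
        proj_tensor_comult_left proj_tensor_comult_right) simp_all
qed

end
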